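(* Let $A\in\mathbb{C}^{m\times n}$ and $X\in\mathbb{C}^{n\times m}$. Then the following are equivalent: (1) $X\in A\{1,4^{\mathfrak{m}}\}$; (2) $XAA^{\sim}=A^{\sim}$; (3) $XA=P_{\mathcal{R}(A^{\sim}),\mathcal{N}(A)}$. In this case, $$A\{1,4^{\mathfrak{m}}\}=\left\{A^{(1,4^{\mathfrak{m}})}+Z(I_m-AA^{(1,4^{\mathfrak{m}})}) : Z\in\mathbb{C}^{n\times m}\right\},$$ where $A^{(1,4^{\mathfrak{m}})}\in A\{1,4^{\mathfrak{m}}\}$ is fixed but arbitrary.
   Context: For a positive integer $k$, the Minkowski metric matrix of order $k$ is $G_k=\mathrm{diag}(1,-I_{k-1})$ (with $G_1=(1)$). For $A\in\mathbb{C}^{m\times n}$, the Minkowski adjoint is $A^{\sim}=G_nA^*G_m$, where $A^*$ is the conjugate transpose. For $A\in\mathbb{C}^{m\times n}$ and $X\in\mathbb{C}^{n\times m}$ consider the equations $(1)\ AXA=A$, $(2)\ XAX=X$, $(3^{\mathfrak{m}})\ (AX)^{\sim}=AX$, $(4^{\mathfrak{m}})\ (XA)^{\sim}=XA$; $A\{i,\dots,k\}$ denotes the set of all $X$ satisfying the listed equations. $\mathcal{R}(\cdot)$ and $\mathcal{N}(\cdot)$ denote range and null space. For subspaces $\mathcal{S},\mathcal{T}\subseteq\mathbb{C}^n$ with $\mathcal{S}\oplus\mathcal{T}=\mathbb{C}^n$, $P_{\mathcal{S},\mathcal{T}}$ denotes the projector onto $\mathcal{S}$ along $\mathcal{T}$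 (statement (3) includes that this direct sum holds). *)

theory Defs
  imports "Jordan_Normal_Form.Matrix"
begin

definition minkowski_metric :: "nat \<Rightarrow> complex mat" where
  "minkowski_metric k = mat k k (\<lambda>(i,j). if i = j then (if i = 0 then 1 else -1) else 0)"

definition conj_transpose :: "complex mat \<Rightarrow> complex mat" where
  "conj_transpose A = transpose_mat (map_mat cnj A)"

definition mink_adj :: "complex mat \<Rightarrow> complex mat" where
  "mink_adj A = minkowski_metric (dim_col A) * conj_transpose A * minkowski_metric (dim_row A)"

definition mink_g14 :: "complex mat \<Rightarrow> complex mat set" where
  "mink_g14 A = {X \<in> carrier_mat (dim_col A) (dim_row A).
                   A * X * A = A \<and> mink_adj (X * A) = X * A}"

definition mat_range :: "complex mat \<Rightarrow> complex vec set" where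
  "mat_range A = {A *\<^sub>v x | x. x \<in> carrier_vec (dim_col A)}"

definition mat_null :: "complex mat \<Rightarrow> complex vec set" where
  "mat_null A = {x \<in> carrier_vec (dim_col A). A *\<^sub>v x = 0\<^sub>v (dim_row A)}"

definition direct_sum_full :: "nat \<Rightarrow> complex vec set \<Rightarrow> complex vec set \<Rightarrow> bool" where
  "direct_sum_full n S T \<longleftrightarrow> S \<subseteq> carrier_vec n \<and> T \<subseteq> carrier_vec n \<and>
     (\<forall>x \<in> carrier_vec n. \<exists>!p. fst p \<in> S \<and> snd p \<in> T \<and> x = fst p + snd p)"

definition is_projector_onto_along :: "nat \<Rightarrow> complex mat \<Rightarrow> complex vec set \<Rightarrow> complex vec set \<Rightarrow> bool" where
  "is_projector_onto_along n P S T \<longleftrightarrow> direct_sum_full n S T \<and> P \<in> carrier_mat n n \<and>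
     (\<forall>s \<in> S. P *\<^sub>v s = s) \<and> (\<forall>t \<in> T. P *\<^sub>v t = 0\<^sub>v n)"

end

theory Submission
  imports Defs
begin

text \<open>
  Since \<open>G\<^sub>k\<^sup>2 = I\<close>, the Minkowski adjoint is an involutive anti-automorphism, and this is
  all the argument uses. If \<open>XAA\<^sup>\<sim> = A\<^sup>\<sim>\<close>, taking adjoints gives \<open>A = A(XA)\<^sup>\<sim>\<close>, so
  \<open>XA = XA(XA)\<^sup>\<sim>\<close> is self-adjoint and \<open>AXA = A(XA)\<^sup>\<sim> = A\<close>. Then \<open>XA = A\<^sup>\<sim>X\<^sup>\<sim>\<close> maps
  into \<open>R(A\<^sup>\<sim>)\<close>, fixes it, and \<open>I - XA\<close> maps into \<open>N(A)\<close>, which makes \<open>XA\<close> the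
  projector. Any two \<open>{1,4\<^sup>m}\<close>-inverses \<open>Y, W\<close> satisfy \<open>WA = YA\<close>, and the solutions \<open>W\<close> of
  \<open>WA = YA\<close> are exactly \<open>Y + Z(I - AY)\<close>.
\<close>

lemma assoc_mult_mat_dims:
  "dim_col (A :: 'a :: semiring_0 mat) = dim_row B \<Longrightarrow> dim_col B = dim_row C \<Longrightarrow>
    A * B * C = A * (B * C)"
  by (rule assoc_mult_mat[of A "dim_row A" "dim_col A" B "dim_col B" C "dim_col C"]) auto

lemma minkowski_metric_dims [simp]:
  "dim_row (minkowski_metric k) = k" "dim_col (minkowski_metric k) = k"
  unfolding minkowski_metric_def by simp_all

lemma minkowski_metric_squared: "minkowski_metric k * minkowski_metric k = 1\<^sub>m k"
  by (rule eq_matI)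
    (auto simp: minkowski_metric_def scalar_prod_def if_distrib[of "\<lambda>x. x * _"] cong: if_cong)

lemma conj_transpose_minkowski_metric [simp]:
  "conj_transpose (minkowski_metric k) = minkowski_metric k"
  unfolding conj_transpose_def minkowski_metric_def by (rule eq_matI) auto

lemma conj_transpose_dims [simp]:
  "dim_row (conj_transpose A) = dim_col A" "dim_col (conj_transpose A) = dim_row A"
  unfolding conj_transpose_def by simp_all

lemma conj_transpose_conj_transpose [simp]: "conj_transpose (conj_transpose A) = A"
  unfolding conj_transpose_def by (rule eq_matI) auto

lemma conj_transpose_mult:
  "dim_col A = dim_row B \<Longrightarrow> conj_transpose (A * B) = conj_transpose B * conj_transpose A"
  by (intro eq_matI) (auto simp: conj_transpose_def scalar_prod_def mult.commute)

lemma mink_adj_carrier [simp]: "A \<in> carrier_mat m n \<Longrightarrow> mink_adj A \<in> carrier_mat n m"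
  unfolding mink_adj_def carrier_mat_def conj_transpose_def minkowski_metric_def by auto

lemma minkowski_metric_cancel:
  "dim_row A = k \<Longrightarrow> minkowski_metric k * (minkowski_metric k * A) = A"
  using assoc_mult_mat_dims[of "minkowski_metric k" "minkowski_metric k" A]
  by (simp add: minkowski_metric_squared)

lemma mink_adj_dims [simp]:
  "dim_row (mink_adj A) = dim_col A" "dim_col (mink_adj A) = dim_row A"
  unfolding mink_adj_def by simp_all

lemma mink_adj_mink_adj [simp]: "mink_adj (mink_adj A) = A"
proof -
  let ?G = minkowski_metric
  have "conj_transpose (mink_adj A) = ?G (dim_row A) * (A * ?G (dim_col A))"
    by (simp add: mink_adj_def conj_transpose_mult)
  then show ?thesis
    by (simp add: mink_adj_def assoc_mult_mat_dims minkowski_metric_cancel minkowski_metric_squared)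
qed

lemma mink_adj_mult:
  "dim_col A = dim_row B \<Longrightarrow> mink_adj (A * B) = mink_adj B * mink_adj A"
  by (simp add: mink_adj_def conj_transpose_mult assoc_mult_mat_dims minkowski_metric_cancel)

lemma mink_adj_mult_mink_adj: "mink_adj (B * mink_adj B) = B * mink_adj B"
  by (simp add: mink_adj_mult)

lemma mink_g14_iff:
  assumes A: "A \<in> carrier_mat m n" and X: "X \<in> carrier_mat n m"
  shows "X \<in> mink_g14 A \<longleftrightarrow> X * A * mink_adj A = mink_adj A"
proof
  assume "X \<in> mink_g14 A"
  then have AXA: "A * X * A = A" and self_adj: "mink_adj (X * A) = X * A"
    unfolding mink_g14_def by auto
  have "X * A * mink_adj A = mink_adj (A * (X * A))"
    using A X self_adj by (simp add: mink_adj_mult)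
  also have "\<dots> = mink_adj A"
    using A X AXA by (simp add: assoc_mult_mat_dims)
  finally show "X * A * mink_adj A = mink_adj A" .
next
  let ?P = "X * A"
  assume fixes_adj: "?P * mink_adj A = mink_adj A"
  have A_eq: "A = A * mink_adj ?P"
    using arg_cong[OF fixes_adj, of mink_adj] A X by (simp add: mink_adj_mult)
  then have "?P = ?P * mink_adj ?P"
    using A X arg_cong[OF A_eq, of "(*) X"] by (simp add: assoc_mult_mat_dims)
  then have self_adj: "mink_adj ?P = ?P"
    by (metis mink_adj_mult_mink_adj)
  have "A * X * A = A"
    using A X A_eq self_adj by (simp add: assoc_mult_mat_dims)
  with self_adj X A show "X \<in> mink_g14 A"
    unfolding mink_g14_def by auto
qed

lemma is_projector_onto_alongI:
  assumes P: "P \<in> carrier_mat n n" and "S \<subseteq> carrier_vec n" "T \<subseteq> carrier_vec n"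
    and fixes_S: "\<And>s. s \<in> S \<Longrightarrow> P *\<^sub>v s = s"
    and kills_T: "\<And>t. t \<in> T \<Longrightarrow> P *\<^sub>v t = 0\<^sub>v n"
    and split: "\<And>x. x \<in> carrier_vec n \<Longrightarrow> P *\<^sub>v x \<in> S \<and> x - P *\<^sub>v x \<in> T"
  shows "is_projector_onto_along n P S T"
  unfolding is_projector_onto_along_def direct_sum_full_def
proof (intro conjI ballI assms)
  fix x :: "complex vec"
  assume x: "x \<in> carrier_vec n"
  show "\<exists>!p. fst p \<in> S \<and> snd p \<in> T \<and> x = fst p + snd p"
  proof
    show "fst (P *\<^sub>v x, x - P *\<^sub>v x) \<in> S \<and> snd (P *\<^sub>v x, x - P *\<^sub>v x) \<in> T
        \<and> x = fst (P *\<^sub>v x, x - P *\<^sub>v x) + snd (P *\<^sub>v x, x - P *\<^sub>v x)"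
      using split[OF x] P x by auto
  next
    fix p :: "complex vec \<times> complex vec"
    assume p: "fst p \<in> S \<and> snd p \<in> T \<and> x = fst p + snd p"
    then have carrier: "fst p \<in> carrier_vec n" "snd p \<in> carrier_vec n"
      using assms by auto
    then have "P *\<^sub>v x = fst p"
      using p P fixes_S kills_T by (simp add: mult_add_distrib_mat_vec)
    moreover have "snd p = x - fst p"
      using p carrier by (intro eq_vecI) auto
    ultimately show "p = (P *\<^sub>v x, x - P *\<^sub>v x)"
      by (simp add: prod_eq_iff)
  qed
qed

lemma mult_eq_if_fixes_mat_range:
  assumes P: "P \<in> carrier_mat n n" and B: "B \<in> carrier_mat n m"
    and fixes_range: "\<And>v. v \<in> mat_range B \<Longrightarrow> P *\<^sub>v v = v"
  shows "P * B = B"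
proof (rule mat_col_eqI)
  fix j assume "j < dim_col B"
  then have j: "j < m" using B by simp
  have "col B j = B *\<^sub>v unit_vec m j"
    using B j by (intro eq_vecI) auto
  then have "col B j \<in> mat_range B"
    using B unfolding mat_range_def by auto
  then show "col (P * B) j = col B j"
    using col_mult2[OF P B j] fixes_range by simp
qed (use P B in auto)

lemma fixes_mink_adj_iff_projector:
  assumes A: "A \<in> carrier_mat m n" and X: "X \<in> carrier_mat n m"
  shows "X * A * mink_adj A = mink_adj A \<longleftrightarrow>
    is_projector_onto_along n (X * A) (mat_range (mink_adj A)) (mat_null A)"
proof
  let ?P = "X * A"
  have P: "?P \<in> carrier_mat n n" using A X by simp
  assume fixes_adj: "?P * mink_adj A = mink_adj A"
  then have "X \<in> mink_g14 A" using mink_g14_iff[OF A X] by simp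
  then have AXA: "A * X * A = A" and self_adj: "mink_adj ?P = ?P"
    unfolding mink_g14_def by auto
  show "is_projector_onto_along n ?P (mat_range (mink_adj A)) (mat_null A)"
  proof (rule is_projector_onto_alongI[OF P])
    show "mat_range (mink_adj A) \<subseteq> carrier_vec n" "mat_null A \<subseteq> carrier_vec n"
      using A unfolding mat_range_def mat_null_def carrier_vec_def by auto
  next
    fix s assume "s \<in> mat_range (mink_adj A)"
    then obtain y where y: "y \<in> carrier_vec m" and s: "s = mink_adj A *\<^sub>v y"
      using A unfolding mat_range_def by auto
    have "?P *\<^sub>v s = (?P * mink_adj A) *\<^sub>v y"
      unfolding s by (rule assoc_mult_mat_vec[OF P mink_adj_carrier[OF A] y, symmetric])
    then show "?P *\<^sub>v s = s"
      using fixes_adj s by simp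
  next
    fix t assume "t \<in> mat_null A"
    then have "t \<in> carrier_vec n" "A *\<^sub>v t = 0\<^sub>v m"
      using A unfolding mat_null_def by auto
    then show "?P *\<^sub>v t = 0\<^sub>v n"
      using A X by (intro eq_vecI) auto
  next
    fix x :: "complex vec" assume x: "x \<in> carrier_vec n"
    have "?P *\<^sub>v x = (mink_adj A * mink_adj X) *\<^sub>v x"
      using A X self_adj by (simp add: mink_adj_mult)
    also have "\<dots> = mink_adj A *\<^sub>v (mink_adj X *\<^sub>v x)"
      using A X x by (simp add: assoc_mult_mat_vec[of _ n m _ n])
    finally have "?P *\<^sub>v x \<in> mat_range (mink_adj A)"
      using A mult_mat_vec_carrier[OF mink_adj_carrier[OF X] x] unfolding mat_range_def by auto
    moreover have "A *\<^sub>v (?P *\<^sub>v x) = (A * X * A) *\<^sub>v x"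
      using A X x by (simp add: assoc_mult_mat_vec[OF A P x])
    then have "A *\<^sub>v (x - ?P *\<^sub>v x) = 0\<^sub>v m"
      using A P x AXA by (simp add: mult_minus_distrib_mat_vec[OF A])
    ultimately show "?P *\<^sub>v x \<in> mat_range (mink_adj A) \<and> x - ?P *\<^sub>v x \<in> mat_null A"
      using A P x unfolding mat_null_def by auto
  qed
next
  assume "is_projector_onto_along n (X * A) (mat_range (mink_adj A)) (mat_null A)"
  then show "X * A * mink_adj A = mink_adj A"
    using A X unfolding is_projector_onto_along_def
    by (intro mult_eq_if_fixes_mat_range[of _ n _ m]) auto
qed

lemma mink_g14_carrier: "X \<in> mink_g14 A \<Longrightarrow> X \<in> carrier_mat (dim_col A) (dim_row A)"
  unfolding mink_g14_def by simp

lemma mink_g14_mult_right_unique: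
  assumes Y: "Y \<in> mink_g14 A" and W: "W \<in> mink_g14 A"
  shows "W * A = Y * A"
proof -
  have A: "A \<in> carrier_mat (dim_row A) (dim_col A)" by (rule carrier_matI) simp_all
  have Yc: "Y \<in> carrier_mat (dim_col A) (dim_row A)"
    and Wc: "W \<in> carrier_mat (dim_col A) (dim_row A)"
    using Y W by (simp_all add: mink_g14_carrier)
  have fixes_adj: "Y * A * mink_adj A = mink_adj A"
    using Y mink_g14_iff[OF A Yc] by simp
  have AWA: "A * W * A = A" and self_adj: "mink_adj (W * A) = W * A"
    using W unfolding mink_g14_def by auto
  have "W * A = Y * A * mink_adj A * mink_adj W"
    using Wc self_adj fixes_adj by (simp add: mink_adj_mult[symmetric])
  also have "\<dots> = Y * (A * W * A)"
    using A Yc Wc self_adj by (simp add: mink_adj_mult[symmetric] assoc_mult_mat_dims)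
  finally show ?thesis
    using AWA by simp
qed

lemma mink_g14_eq_mult_right:
  assumes Y: "Y \<in> mink_g14 A"
  shows "mink_g14 A = {W \<in> carrier_mat (dim_col A) (dim_row A). W * A = Y * A}"
proof (intro equalityI subsetI)
  fix W assume "W \<in> mink_g14 A"
  then show "W \<in> {W \<in> carrier_mat (dim_col A) (dim_row A). W * A = Y * A}"
    using mink_g14_carrier mink_g14_mult_right_unique[OF Y] by blast
next
  fix W assume "W \<in> {W \<in> carrier_mat (dim_col A) (dim_row A). W * A = Y * A}"
  then have W: "W \<in> carrier_mat (dim_col A) (dim_row A)" and WA: "W * A = Y * A"
    by auto
  have "A * W * A = A * (Y * A)"
    using W by (simp add: assoc_mult_mat_dims WA)
  also have "\<dots> = A"
    using Y mink_g14_carrier[OF Y] unfolding mink_g14_def by (simp add: assoc_mult_mat_dims)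
  finally show "W \<in> mink_g14 A"
    using W WA Y unfolding mink_g14_def by simp
qed

lemma mult_right_eq_solutions:
  fixes A Y :: "'a :: comm_ring_1 mat"
  assumes A: "A \<in> carrier_mat m n" and Y: "Y \<in> carrier_mat n m" and AYA: "A * Y * A = A"
  shows "{W \<in> carrier_mat n m. W * A = Y * A} =
    {Y + Z * (1\<^sub>m m - A * Y) | Z. Z \<in> carrier_mat n m}"
proof (intro equalityI subsetI)
  fix W assume "W \<in> {W \<in> carrier_mat n m. W * A = Y * A}"
  then have W: "W \<in> carrier_mat n m" and WA: "W * A = Y * A" by auto
  have WY: "W - Y \<in> carrier_mat n m" using Y by (rule minus_carrier_mat)
  have "(W - Y) * (A * Y) = (W * A - Y * A) * Y"
    using W Y A by (simp add: minus_mult_distrib_mat[OF W Y A] assoc_mult_mat_dims[symmetric])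
  also have "\<dots> = 0\<^sub>m n m"
    using mult_carrier_mat[OF Y A] Y WA by simp
  finally have "Y + (W - Y) * (1\<^sub>m m - A * Y) = Y + ((W - Y) - 0\<^sub>m n m)"
    using WY by (simp add: mult_minus_distrib_mat[OF WY one_carrier_mat mult_carrier_mat[OF A Y]]
        right_mult_one_mat[OF WY])
  also have "\<dots> = W"
    using Y W by (intro eq_matI) auto
  finally have "W = Y + (W - Y) * (1\<^sub>m m - A * Y)" ..
  then show "W \<in> {Y + Z * (1\<^sub>m m - A * Y) | Z. Z \<in> carrier_mat n m}"
    using WY by blast
next
  fix W assume "W \<in> {Y + Z * (1\<^sub>m m - A * Y) | Z. Z \<in> carrier_mat n m}"
  then obtain Z where Z: "Z \<in> carrier_mat n m" and W: "W = Y + Z * (1\<^sub>m m - A * Y)"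
    by blast
  have I_AY: "1\<^sub>m m - A * Y \<in> carrier_mat m m" using A Y by (simp add: minus_carrier_mat)
  have "(1\<^sub>m m - A * Y) * A = 0\<^sub>m m n"
    using A Y AYA by (simp add: minus_mult_distrib_mat[of _ m m])
  then have "W * A = Y * A"
    using A Y Z I_AY unfolding W
    by (simp add: add_mult_distrib_mat[of _ n m] assoc_mult_mat[OF Z I_AY A])
  then show "W \<in> {W \<in> carrier_mat n m. W * A = Y * A}"
    using Y Z I_AY unfolding W by simp
qed

lemma mink_g14_eq_param:
  assumes Y: "Y \<in> mink_g14 A"
  shows "mink_g14 A =
    {Y + Z * (1\<^sub>m (dim_row A) - A * Y) | Z. Z \<in> carrier_mat (dim_col A) (dim_row A)}"
proof -
  have A: "A \<in> carrier_mat (dim_row A) (dim_col A)"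
    by (rule carrier_matI) simp_all
  have "A * Y * A = A"
    using Y unfolding mink_g14_def by simp
  from mult_right_eq_solutions[OF A mink_g14_carrier[OF Y] this] show ?thesis
    unfolding mink_g14_eq_mult_right[OF Y] .
qed

theorem theorem4p6:
  fixes A X :: "complex mat" and m n :: nat
  assumes "m > 0" and "n > 0"
    and "A \<in> carrier_mat m n" and "X \<in> carrier_mat n m"
  shows "(X \<in> mink_g14 A \<longleftrightarrow> X * A * mink_adj A = mink_adj A)
    \<and> (X * A * mink_adj A = mink_adj A \<longleftrightarrow>
         is_projector_onto_along n (X * A) (mat_range (mink_adj A)) (mat_null A))
    \<and> (X \<in> mink_g14 A \<longrightarrow>
         (\<forall>Y \<in> mink_g14 A.
            mink_g14 A = {Y + Z * (1\<^sub>m m - A * Y) | Z. Z \<in> carrier_mat n m}))"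
proof -
  have "mink_g14 A = {Y + Z * (1\<^sub>m m - A * Y) | Z. Z \<in> carrier_mat n m}"
    if "Y \<in> mink_g14 A" for Y
    using mink_g14_eq_param[OF that] assms(3) by auto
  then show ?thesis
    using mink_g14_iff[OF assms(3,4)] fixes_mink_adj_iff_projector[OF assms(3,4)] by blast
qed

end
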